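(* Let $G$ be an infinite group in which every non-abelian subgroup $H$ satisfies $C_G(H)\le H$. Then the Fitting subgroup of $G$ is abelian.
   Context: The Fitting subgroup of $G$ is the subgroup generated by all nilpotent normal subgroups of $G$. $C_G(H)$ denotes the centralizer of $H$ in $G$. *)

theory Defs
  imports "HOL-Algebra.Algebra"
begin

definition centralizer :: "('a, 'b) monoid_scheme \<Rightarrow> 'a set \<Rightarrow> 'a set" where
  "centralizer G H = {g \<in> carrier G. \<forall>h \<in> H. g \<otimes>\<^bsub>G\<^esub> h = h \<otimes>\<^bsub>G\<^esub> g}"

definition commutator :: "('a, 'b) monoid_scheme \<Rightarrow> 'a \<Rightarrow> 'a \<Rightarrow> 'a" where
  "commutator G x y = inv\<^bsub>G\<^esub> x \<otimes>\<^bsub>G\<^esub> inv\<^bsub>G\<^esub> y \<otimes>\<^bsub>G\<^esub> x \<otimes>\<^bsub>G\<^esub> y"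

text \<open>Lower central series: gamma_1 = G (index 0 here), gamma_{i+1} = [gamma_i, G].\<close>
fun lower_central :: "('a, 'b) monoid_scheme \<Rightarrow> nat \<Rightarrow> 'a set" where
  "lower_central G 0 = carrier G"
| "lower_central G (Suc n) =
     generate G {commutator G x y | x y. x \<in> lower_central G n \<and> y \<in> carrier G}"

definition nilpotent_group :: "('a, 'b) monoid_scheme \<Rightarrow> bool" where
  "nilpotent_group G \<longleftrightarrow> group G \<and> (\<exists>n. lower_central G n = {\<one>\<^bsub>G\<^esub>})"

definition fitting_subgroup :: "('a, 'b) monoid_scheme \<Rightarrow> 'a set" where
  "fitting_subgroup G =
     generate G (\<Union>{N. N \<lhd> G \<and> nilpotent_group (G\<lparr>carrier := N\<rparr>)})"

end

theory Submission
  imports Defs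
begin

text \<open>
  Let \<open>a, b\<close> be non-commuting elements whose commutator \<open>z = [a, b]\<close> commutes with both.
  Every element of \<open>\<langle>a^e, b^e\<rangle>\<close> has the form \<open>a^(e i) b^(e j) z^(e^2 k)\<close>, and this subgroup
  is non-abelian unless \<open>z^(e^2) = 1\<close>, so by hypothesis it contains its centralizer. For
  \<open>e = 2\<close> this puts \<open>z\<close> into \<open>\<langle>a^2, b^2\<rangle>\<close>, which is absurd if \<open>z\<close> has infinite order;
  if \<open>z\<close> has order \<open>m\<close>, then for \<open>e = m + 1\<close> it puts \<open>a^m\<close> and \<open>b^m\<close> into
  \<open>\<langle>a^e, b^e\<rangle>\<close>, and a determinant \<open>\<equiv> 1 (mod e)\<close> shows that \<open>a\<close> and \<open>b\<close> have finite
  order. Hence \<open>\<langle>a, b\<rangle>\<close> is finite, and so is \<open>C\<^sub>G(a, b) \<subseteq> \<langle>a, b\<rangle>\<close>.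

  Consequently any set of elements whose conjugates of \<open>a\<close> and of \<open>b\<close> range over finite sets
  is finite. A non-abelian nilpotent normal subgroup \<open>N\<close> contains such a pair (\<open>a\<close> in the
  second but not the first centre of \<open>N\<close>), and induction up the upper central series shows
  \<open>N\<close>, hence \<open>G\<close>, finite. Likewise two abelian normal subgroups containing non-commuting
  \<open>a\<close>, \<open>b\<close> are finite, since \<open>[a, b]\<close> lies in their intersection. So in an infinite \<open>G\<close>
  all nilpotent normal subgroups are abelian and centralize each other, and the Fitting subgroup
  they generate is abelian.
\<close>

section \<open>Centralizers, commutators and conjugation\<close>

context group
begin

lemma subgroup_centralizer:
  assumes "H \<subseteq> carrier G"
  shows "subgroup (centralizer G H) G"
proof (rule subgroupI)
  fix g assume "g \<in> centralizer G H"
  then have g: "g \<in> carrier G" and comm: "\<And>h. h \<in> H \<Longrightarrow> g \<otimes> h = h \<otimes> g"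
    unfolding centralizer_def by auto
  have "inv g \<otimes> h = h \<otimes> inv g" if h: "h \<in> H" for h
  proof -
    have hc: "h \<in> carrier G" using h assms by blast
    have "inv g \<otimes> h = inv g \<otimes> (h \<otimes> g) \<otimes> inv g" using g hc by (simp add: m_assoc)
    also have "\<dots> = h \<otimes> inv g" using g hc by (simp add: comm[OF h, symmetric] m_assoc[symmetric])
    finally show ?thesis .
  qed
  then show "inv g \<in> centralizer G H" using g unfolding centralizer_def by simp
next
  fix g g' assume "g \<in> centralizer G H" "g' \<in> centralizer G H"
  then have g: "g \<in> carrier G" "g' \<in> carrier G"
    and comm: "\<And>h. h \<in> H \<Longrightarrow> g \<otimes> h = h \<otimes> g" "\<And>h. h \<in> H \<Longrightarrow> g' \<otimes> h = h \<otimes> g'"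
    unfolding centralizer_def by auto
  have "g \<otimes> g' \<otimes> h = h \<otimes> (g \<otimes> g')" if h: "h \<in> H" for h
  proof -
    have hc: "h \<in> carrier G" using h assms by blast
    have "g \<otimes> g' \<otimes> h = g \<otimes> h \<otimes> g'" using g hc by (simp add: m_assoc comm(2)[OF h])
    also have "\<dots> = h \<otimes> (g \<otimes> g')" using g hc by (simp add: m_assoc comm(1)[OF h])
    finally show ?thesis .
  qed
  then show "g \<otimes> g' \<in> centralizer G H" using g unfolding centralizer_def by simp
qed (use assms in \<open>auto simp: centralizer_def subsetD\<close>)

lemma centralizer_singleton_iff:
  "g \<in> centralizer G {a} \<longleftrightarrow> g \<in> carrier G \<and> g \<otimes> a = a \<otimes> g"
  unfolding centralizer_def by simp

lemma generate_subset_centralizer: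
  assumes "S \<subseteq> carrier G" "A \<subseteq> carrier G" "S \<subseteq> centralizer G A"
  shows "generate G S \<subseteq> centralizer G A"
  using generate_subgroup_incl[OF assms(3) subgroup_centralizer[OF assms(2)]] .

lemma mem_centralizer_iff:
  "g \<in> carrier G \<Longrightarrow> H \<subseteq> carrier G \<Longrightarrow> g \<in> centralizer G H \<longleftrightarrow> H \<subseteq> centralizer G {g}"
  unfolding centralizer_def by auto

lemma int_pow_commute:
  assumes "x \<in> carrier G" "y \<in> carrier G" "x \<otimes> y = y \<otimes> x"
  shows "x [^] (i::int) \<otimes> y [^] (j::int) = y [^] j \<otimes> x [^] i"
proof -
  have "y [^] j \<in> centralizer G {x}"
    using subgroup_int_pow_closed[OF subgroup_centralizer, of "{x}" y j] assms
    by (simp add: centralizer_singleton_iff)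
  then have "x [^] i \<in> centralizer G {y [^] j}"
    using subgroup_int_pow_closed[OF subgroup_centralizer, of "{y [^] j}" x i] assms
    by (simp add: centralizer_singleton_iff)
  then show ?thesis by (simp add: centralizer_singleton_iff)
qed

lemma int_pow_mod:
  assumes "a \<in> carrier G" "a [^] (n::int) = \<one>"
  shows "a [^] (k::int) = a [^] (k mod n)"
proof -
  have "a [^] k = a [^] (n * (k div n)) \<otimes> a [^] (k mod n)"
    using assms(1) by (simp flip: int_pow_mult)
  then show ?thesis using assms by (simp add: int_pow_pow[symmetric])
qed

lemma conj_int_pow:
  assumes "g \<in> carrier G" "x \<in> carrier G"
  shows "(inv g \<otimes> x \<otimes> g) [^] (i::int) = inv g \<otimes> x [^] i \<otimes> g"
proof -
  have "(\<lambda>w. inv g \<otimes> w \<otimes> g) \<in> hom G G"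
    using assms by (intro homI) (simp_all add: m_assoc flip: m_assoc[of g "inv g"])
  from hom_int_pow[OF this assms(2) is_group is_group] show ?thesis by simp
qed

lemma conj_eq_iff:
  assumes "g \<in> carrier G" "a \<in> carrier G" "b \<in> carrier G"
  shows "inv g \<otimes> a \<otimes> g = b \<longleftrightarrow> a \<otimes> g = g \<otimes> b"
  using assms by (metis inv_closed inv_solve_left' m_assoc m_closed)

lemma commutator_closed [simp]:
  "a \<in> carrier G \<Longrightarrow> b \<in> carrier G \<Longrightarrow> commutator G a b \<in> carrier G"
  unfolding commutator_def by simp

lemma mult_eq_commutator:
  "a \<in> carrier G \<Longrightarrow> b \<in> carrier G \<Longrightarrow> a \<otimes> b = b \<otimes> a \<otimes> commutator G a b"
  unfolding commutator_def by (simp add: m_assoc[symmetric]) (simp add: m_assoc)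

lemma commutator_eq_one_iff:
  assumes "a \<in> carrier G" "b \<in> carrier G"
  shows "commutator G a b = \<one> \<longleftrightarrow> a \<otimes> b = b \<otimes> a"
  using mult_eq_commutator[OF assms] assms by (metis commutator_closed l_cancel_one' m_closed)

lemma conj_eq_imp_commute:
  assumes "s \<in> carrier G" "t \<in> carrier G" "a \<in> carrier G"
    and "inv t \<otimes> a \<otimes> t = inv s \<otimes> a \<otimes> s"
  shows "t \<otimes> inv s \<otimes> a = a \<otimes> (t \<otimes> inv s)"
proof -
  have "inv (t \<otimes> inv s) \<otimes> a \<otimes> (t \<otimes> inv s) = s \<otimes> (inv t \<otimes> a \<otimes> t) \<otimes> inv s"
    using assms(1-3) by (simp add: inv_mult_group m_assoc)
  also have "\<dots> = a" using assms by (simp add: m_assoc) (simp flip: m_assoc)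
  finally show ?thesis using assms(1-3) conj_eq_iff[of "t \<otimes> inv s" a a] by simp
qed

text \<open>The conjugation map \<open>t \<mapsto> (a\<^sup>t, b\<^sup>t)\<close> has the cosets of \<open>C\<^sub>G({a, b})\<close> as fibres.\<close>

lemma finite_of_finite_conjugates:
  assumes "S \<subseteq> carrier G" "a \<in> carrier G" "b \<in> carrier G" "finite (centralizer G {a, b})"
    and "finite A" "finite B"
    and "\<And>t. t \<in> S \<Longrightarrow> inv t \<otimes> a \<otimes> t \<in> A" "\<And>t. t \<in> S \<Longrightarrow> inv t \<otimes> b \<otimes> t \<in> B"
  shows "finite S"
proof -
  define f where "f t = (inv t \<otimes> a \<otimes> t, inv t \<otimes> b \<otimes> t)" for t
  have "finite {t \<in> S. f t = f s}" if s: "s \<in> S" for s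
  proof -
    have "{t \<in> S. f t = f s} \<subseteq> (\<lambda>g. g \<otimes> s) ` centralizer G {a, b}"
    proof
      fix t assume "t \<in> {t \<in> S. f t = f s}"
      then have t: "t \<in> carrier G" "f t = f s" using assms(1) by auto
      have sc: "s \<in> carrier G" using s assms(1) by blast
      have "t \<otimes> inv s \<in> centralizer G {a, b}"
        using conj_eq_imp_commute[OF sc t(1)] t(2) assms(2,3) sc t(1)
        unfolding centralizer_def f_def by auto
      moreover have "t = t \<otimes> inv s \<otimes> s" using t(1) sc by (simp add: m_assoc)
      ultimately show "t \<in> (\<lambda>g. g \<otimes> s) ` centralizer G {a, b}" by blast
    qed
    then show ?thesis using assms(4) finite_subset by blast
  qed
  moreover have "finite (f ` S)"
    using assms(5-8) finite_subset[of "f ` S" "A \<times> B"] unfolding f_def by auto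
  ultimately have "finite (\<Union>s\<in>S. {t \<in> S. f t = f s})"
    using finite_UN[of "f ` S" "\<lambda>p. {t \<in> S. f t = p}"] by auto
  moreover have "S \<subseteq> (\<Union>s\<in>S. {t \<in> S. f t = f s})" by blast
  ultimately show ?thesis by (rule finite_subset[rotated])
qed

lemma finite_carrier_of_finite_normals:
  assumes "N1 \<lhd> G" "finite N1" "N2 \<lhd> G" "finite N2"
    and "a \<in> N1" "b \<in> N2" "finite (centralizer G {a, b})"
  shows "finite (carrier G)"
proof (rule finite_of_finite_conjugates[OF _ _ _ assms(7,2,4)])
  show "a \<in> carrier G" "b \<in> carrier G"
    using subgroup.mem_carrier[OF normal_imp_subgroup[OF assms(1)] assms(5)]
      subgroup.mem_carrier[OF normal_imp_subgroup[OF assms(3)] assms(6)] by auto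
  show "inv t \<otimes> a \<otimes> t \<in> N1" "inv t \<otimes> b \<otimes> t \<in> N2" if "t \<in> carrier G" for t
    using normal.inv_op_closed1[OF assms(1) that assms(5)] normal.inv_op_closed1[OF assms(3) that assms(6)]
    by auto
qed simp

lemma commutator_mem_normal_inter:
  assumes "N1 \<lhd> G" "N2 \<lhd> G" "p \<in> N1" "q \<in> N2"
  shows "commutator G p q \<in> N1 \<inter> N2"
proof -
  have N: "subgroup N1 G" "subgroup N2 G" using assms(1,2) by (simp_all add: normal_imp_subgroup)
  have pq: "p \<in> carrier G" "q \<in> carrier G"
    using subgroup.mem_carrier[OF N(1) assms(3)] subgroup.mem_carrier[OF N(2) assms(4)] .
  have "inv p \<otimes> (inv q \<otimes> p \<otimes> q) \<in> N1"
    using normal.inv_op_closed1[OF assms(1) pq(2) assms(3)] subgroup.m_inv_closed[OF N(1) assms(3)]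
      subgroup.m_closed[OF N(1)] by blast
  moreover have "inv p \<otimes> inv q \<otimes> p \<otimes> q \<in> N2"
    using normal.inv_op_closed1[OF assms(2) pq(1) subgroup.m_inv_closed[OF N(2) assms(4)]]
      subgroup.m_closed[OF N(2)] assms(4) by blast
  ultimately show ?thesis using pq unfolding commutator_def by (simp add: m_assoc)
qed

lemma comm_group_generate:
  assumes "S \<subseteq> carrier G" "\<And>a b. a \<in> S \<Longrightarrow> b \<in> S \<Longrightarrow> a \<otimes> b = b \<otimes> a"
  shows "comm_group (G\<lparr>carrier := generate G S\<rparr>)"
proof -
  have "S \<subseteq> centralizer G S"
    using assms unfolding centralizer_def by auto
  then have "generate G S \<subseteq> centralizer G S"
    by (rule generate_subset_centralizer[OF assms(1) assms(1)])
  then have "S \<subseteq> centralizer G (generate G S)"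
    using assms(1) unfolding centralizer_def by auto
  then have "generate G S \<subseteq> centralizer G (generate G S)"
    by (rule generate_subset_centralizer[OF assms(1) generate_incl[OF assms(1)]])
  then show ?thesis
    using group.group_comm_groupI[OF subgroup_imp_group[OF generate_is_subgroup[OF assms(1)]]]
    unfolding centralizer_def by auto
qed

end

locale nonabelian_self_centralizing = group +
  assumes centralizer_subset:
    "\<lbrakk>subgroup H G; \<not> comm_group (G\<lparr>carrier := H\<rparr>)\<rbrakk> \<Longrightarrow> centralizer G H \<subseteq> H"
begin

lemma centralizer_subset_generate_pair:
  assumes "a \<in> carrier G" "b \<in> carrier G" "a \<otimes> b \<noteq> b \<otimes> a"
  shows "centralizer G {a, b} \<subseteq> generate G {a, b}"
proof
  fix g assume g: "g \<in> centralizer G {a, b}"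
  have S: "{a, b} \<subseteq> carrier G" using assms by simp
  have "\<not> comm_group (G\<lparr>carrier := generate G {a, b}\<rparr>)"
    using comm_groupE(4)[of "G\<lparr>carrier := generate G {a, b}\<rparr>" a b] assms(3)
    by (auto intro: generate.incl)
  moreover have "g \<in> centralizer G (generate G {a, b})"
  proof -
    have gc: "g \<in> carrier G" using g unfolding centralizer_def by simp
    then have "{a, b} \<subseteq> centralizer G {g}" using g S mem_centralizer_iff by blast
    then have "generate G {a, b} \<subseteq> centralizer G {g}"
      using generate_subset_centralizer[OF S] gc by simp
    then show ?thesis using mem_centralizer_iff[OF gc generate_incl[OF S]] by simp
  qed
  ultimately show "g \<in> generate G {a, b}"
    using centralizer_subset[OF generate_is_subgroup[OF S]] by blast
qed

end

section \<open>Two-generator groups with central commutator\<close>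

locale central_commutator_pair = group +
  fixes x y z
  assumes x_closed [simp]: "x \<in> carrier G" and y_closed [simp]: "y \<in> carrier G"
    and z_closed [simp]: "z \<in> carrier G"
    and x_y_swap: "x \<otimes> y = y \<otimes> x \<otimes> z"
    and z_x_commute: "z \<otimes> x = x \<otimes> z" and z_y_commute: "z \<otimes> y = y \<otimes> z"
begin

definition nf :: "int \<Rightarrow> int \<Rightarrow> int \<Rightarrow> 'a" where
  "nf i j k = x [^] i \<otimes> y [^] j \<otimes> z [^] k"

lemma nf_closed [simp]: "nf i j k \<in> carrier G"
  unfolding nf_def by simp

lemma nf_simps:
  "nf 0 0 0 = \<one>" "nf i 0 0 = x [^] i" "nf 0 j 0 = y [^] j" "nf 0 0 k = z [^] k"
  "nf 1 0 0 = x" "nf 0 1 0 = y" "nf 0 0 1 = z"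
  unfolding nf_def by auto

lemma z_pow_commute:
  "w \<in> carrier G \<Longrightarrow> w \<otimes> z = z \<otimes> w \<Longrightarrow> w \<otimes> z [^] (k::int) = z [^] k \<otimes> w"
  using int_pow_commute[of w z 1 k] by simp

lemma y_pow_x_pow:
  "y [^] (j::int) \<otimes> x [^] (i::int) = x [^] i \<otimes> y [^] j \<otimes> z [^] (- (i * j))"
proof -
  have "inv y \<otimes> x \<otimes> y = x \<otimes> z"
    by (rule conj_eq_iff[THEN iffD2]) (simp_all add: x_y_swap m_assoc)
  then have "inv y \<otimes> x [^] i \<otimes> y = x [^] i \<otimes> z [^] i"
    using conj_int_pow[of y x i] int_pow_mult_distrib[OF z_x_commute[symmetric]] by simp
  then have "x [^] i \<otimes> y = y \<otimes> (x [^] i \<otimes> z [^] i)"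
    by (rule conj_eq_iff[THEN iffD1, rotated -1]) simp_all
  then have "y \<otimes> x [^] i = x [^] i \<otimes> y \<otimes> z [^] (- i)"
    using int_pow_commute[of x z i "- i"] z_x_commute
    by (simp add: m_assoc int_pow_mult[of z, symmetric] flip: int_pow_neg)
  then have "inv (x [^] i) \<otimes> y \<otimes> x [^] i = y \<otimes> z [^] (- i)"
    by (intro conj_eq_iff[THEN iffD2]) (simp_all add: m_assoc)
  then have "inv (x [^] i) \<otimes> y [^] j \<otimes> x [^] i = y [^] j \<otimes> z [^] (- i * j)"
    using conj_int_pow[of "x [^] i" y j] int_pow_mult_distrib[OF z_pow_commute[OF y_closed z_y_commute[symmetric]]]
    by (simp add: int_pow_pow)
  then have "y [^] j \<otimes> x [^] i = x [^] i \<otimes> (y [^] j \<otimes> z [^] (- i * j))"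
    by (rule conj_eq_iff[THEN iffD1, rotated -1]) simp_all
  then show ?thesis by (simp add: m_assoc)
qed

lemma z_pow_commute_x_pow: "z [^] (k::int) \<otimes> x [^] (i::int) = x [^] i \<otimes> z [^] k"
  using int_pow_commute[OF z_closed x_closed z_x_commute] .

lemma z_pow_commute_y_pow: "z [^] (k::int) \<otimes> y [^] (j::int) = y [^] j \<otimes> z [^] k"
  using int_pow_commute[OF z_closed y_closed z_y_commute] .

lemma nf_mult: "nf i j k \<otimes> nf i' j' k' = nf (i + i') (j + j') (k + k' - j * i')"
proof -
  have z_k: "z [^] k \<otimes> (x [^] i' \<otimes> y [^] j') = x [^] i' \<otimes> y [^] j' \<otimes> z [^] k"
    using z_pow_commute_x_pow[of k i'] z_pow_commute_y_pow[of k j']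
    by (metis int_pow_closed m_assoc x_closed y_closed z_closed)
  have "nf i j k \<otimes> nf i' j' k' = x [^] i \<otimes> y [^] j \<otimes> (z [^] k \<otimes> (x [^] i' \<otimes> y [^] j')) \<otimes> z [^] k'"
    unfolding nf_def by (simp add: m_assoc)
  also have "\<dots> = x [^] i \<otimes> (y [^] j \<otimes> x [^] i') \<otimes> y [^] j' \<otimes> (z [^] k \<otimes> z [^] k')"
    unfolding z_k by (simp add: m_assoc)
  also have "\<dots> = x [^] i \<otimes> x [^] i' \<otimes> y [^] j \<otimes> (z [^] (- (i' * j)) \<otimes> y [^] j') \<otimes> (z [^] k \<otimes> z [^] k')"
    unfolding y_pow_x_pow by (simp add: m_assoc)
  also have "\<dots> = x [^] i \<otimes> x [^] i' \<otimes> (y [^] j \<otimes> y [^] j') \<otimes> (z [^] (- (i' * j)) \<otimes> (z [^] k \<otimes> z [^] k'))"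
    unfolding z_pow_commute_y_pow by (simp add: m_assoc)
  also have "\<dots> = nf (i + i') (j + j') (k + k' - j * i')"
    unfolding nf_def by (simp add: int_pow_mult[symmetric] algebra_simps)
  finally show ?thesis .
qed

lemma nf_eq_imp_z_pow_eq_one: "nf i j k = nf i j k' \<Longrightarrow> z [^] (k - k') = \<one>"
  unfolding nf_def by (simp add: m_assoc int_pow_diff)

lemma x_pow_y_pow_commute_iff:
  "x [^] (a::int) \<otimes> y [^] (b::int) = y [^] b \<otimes> x [^] a \<longleftrightarrow> z [^] (a * b) = \<one>"
proof -
  have "y [^] b \<otimes> x [^] a = x [^] a \<otimes> y [^] b \<otimes> z [^] (- (a * b))"
    using y_pow_x_pow .
  then have "x [^] a \<otimes> y [^] b = y [^] b \<otimes> x [^] a \<longleftrightarrow> z [^] (- (a * b)) = \<one>"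
    by (simp add: m_assoc)
  then show ?thesis by (simp add: int_pow_neg)
qed

lemma generate_powers_nf:
  assumes "g \<in> generate G {x [^] (a::int), y [^] (b::int)}"
  shows "\<exists>i j k. g = nf (a * i) (b * j) (a * b * k)"
  using assms
proof (induction rule: generate.induct)
  case one
  have "\<one> = nf (a * 0) (b * 0) (a * b * 0)" by (simp add: nf_simps)
  then show ?case by blast
next
  case (incl h)
  then consider "h = nf (a * 1) (b * 0) (a * b * 0)" | "h = nf (a * 0) (b * 1) (a * b * 0)"
    by (auto simp: nf_simps)
  then show ?case by cases blast+
next
  case (inv h)
  then consider "inv h = nf (a * -1) (b * 0) (a * b * 0)" | "inv h = nf (a * 0) (b * -1) (a * b * 0)"
    by (auto simp: nf_simps int_pow_neg)
  then show ?case by cases blast+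
next
  case (eng h1 h2)
  then obtain i j k i' j' k' where "h1 = nf (a * i) (b * j) (a * b * k)" "h2 = nf (a * i') (b * j') (a * b * k')"
    by blast
  then have "h1 \<otimes> h2 = nf (a * (i + i')) (b * (j + j')) (a * b * (k + k' - j * i'))"
    by (simp add: nf_mult algebra_simps)
  then show ?case by blast
qed

lemma nf_commute_x_imp_z_pow_eq_one: "nf i j k \<otimes> x = x \<otimes> nf i j k \<Longrightarrow> z [^] j = \<one>"
  using nf_eq_imp_z_pow_eq_one[of "i + 1" j k "k - j"] nf_mult[of i j k 1 0 0] nf_mult[of 1 0 0 i j k]
  by (simp add: nf_simps add.commute int_pow_neg)

lemma nf_commute_y_imp_z_pow_eq_one: "nf i j k \<otimes> y = y \<otimes> nf i j k \<Longrightarrow> z [^] i = \<one>"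
  using nf_eq_imp_z_pow_eq_one[of i "j + 1" k "k - i"] nf_mult[of i j k 0 1 0] nf_mult[of 0 1 0 i j k]
  by (simp add: nf_simps add.commute int_pow_neg)

definition trivial_mod_z :: "int \<Rightarrow> int \<Rightarrow> bool" where
  "trivial_mod_z i j \<longleftrightarrow> (\<exists>k. nf i j k = \<one>)"

lemma trivial_mod_z_add:
  assumes "trivial_mod_z i j" "trivial_mod_z i' j'"
  shows "trivial_mod_z (i + i') (j + j')"
proof -
  obtain k k' where "nf i j k = \<one>" "nf i' j' k' = \<one>"
    using assms unfolding trivial_mod_z_def by blast
  then have "nf (i + i') (j + j') (k + k' - j * i') = \<one>" by (simp flip: nf_mult)
  then show ?thesis unfolding trivial_mod_z_def by blast
qed

lemma trivial_mod_z_uminus: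
  assumes "trivial_mod_z i j"
  shows "trivial_mod_z (- i) (- j)"
proof -
  obtain k where k: "nf i j k = \<one>" using assms unfolding trivial_mod_z_def by blast
  have "nf i j k \<otimes> nf (- i) (- j) (- k - i * j) = \<one>"
    by (simp add: nf_mult nf_simps algebra_simps)
  then have "nf (- i) (- j) (- k - i * j) = \<one>" by (simp add: k)
  then show ?thesis unfolding trivial_mod_z_def by blast
qed

lemma trivial_mod_z_scale:
  assumes "trivial_mod_z i j"
  shows "trivial_mod_z (n * i) (n * j)"
proof -
  have nat_scale: "trivial_mod_z (int m * i) (int m * j)" for m
  proof (induction m)
    case 0
    have "nf 0 0 0 = \<one>" by (simp add: nf_simps)
    then show ?case unfolding trivial_mod_z_def by auto
  next
    case (Suc m)
    then show ?case using trivial_mod_z_add[OF Suc assms] by (simp add: algebra_simps)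
  qed
  show ?thesis
    using nat_scale[of "nat n"] trivial_mod_z_uminus[OF nat_scale[of "nat (- n)"]]
    by (cases "n \<ge> 0") simp_all
qed

lemma trivial_mod_z_lincomb:
  "trivial_mod_z p q \<Longrightarrow> trivial_mod_z r s \<Longrightarrow> trivial_mod_z (a * p + b * r) (a * q + b * s)"
  using trivial_mod_z_add trivial_mod_z_scale by blast

lemma trivial_mod_z_of_x_pow:
  assumes "x [^] a = nf i j k"
  shows "trivial_mod_z (i - a) j"
proof -
  have "nf (i - a) j k = nf (- a) 0 0 \<otimes> nf i j k" by (simp add: nf_mult)
  also have "\<dots> = \<one>" by (simp add: nf_simps int_pow_neg flip: assms)
  finally show ?thesis unfolding trivial_mod_z_def by blast
qed

lemma trivial_mod_z_of_y_pow:
  assumes "y [^] b = nf i j k"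
  shows "trivial_mod_z i (j - b)"
proof -
  have "nf i (j - b) k = nf i j k \<otimes> nf 0 (- b) 0" by (simp add: nf_mult)
  also have "\<dots> = \<one>" by (simp add: nf_simps int_pow_neg flip: assms)
  finally show ?thesis unfolding trivial_mod_z_def by blast
qed

lemma x_pow_eq_one_of_trivial_mod_z:
  assumes "trivial_mod_z i 0" "z [^] (m::int) = \<one>"
  shows "x [^] (i * m) = \<one>"
proof -
  obtain k :: int where "x [^] i \<otimes> z [^] k = \<one>"
    using assms(1) unfolding trivial_mod_z_def nf_def by auto
  then have "x [^] i = z [^] (- k)"
    by (simp add: int_pow_neg inv_equality[symmetric])
  then have "x [^] (i * m) = (z [^] m) [^] (- k)"
    by (simp add: int_pow_pow mult.commute flip: int_pow_pow[of x])
  then show ?thesis using assms(2) by simp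
qed

lemma y_pow_eq_one_of_trivial_mod_z:
  assumes "trivial_mod_z 0 j" "z [^] (m::int) = \<one>"
  shows "y [^] (j * m) = \<one>"
proof -
  obtain k :: int where "y [^] j \<otimes> z [^] k = \<one>"
    using assms(1) unfolding trivial_mod_z_def nf_def by auto
  then have "y [^] j = z [^] (- k)"
    by (simp add: int_pow_neg inv_equality[symmetric])
  then have "y [^] (j * m) = (z [^] m) [^] (- k)"
    by (simp add: int_pow_pow mult.commute flip: int_pow_pow[of y])
  then show ?thesis using assms(2) by simp
qed

lemma finite_generate_of_orders:
  fixes N M :: int
  assumes "N > 0" "x [^] N = \<one>" "y [^] N = \<one>" "M > 0" "z [^] M = \<one>"
  shows "finite (generate G {x, y})"
proof -
  have "generate G {x, y} \<subseteq> (\<lambda>(i, j, k). nf i j k) ` ({0..<N} \<times> {0..<N} \<times> {0..<M})"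
  proof
    fix g assume "g \<in> generate G {x, y}"
    then obtain i j k where "g = nf i j k"
      using generate_powers_nf[of g 1 1] by auto
    then have "g = nf (i mod N) (j mod N) (k mod M)"
      unfolding nf_def using assms int_pow_mod[of x N i] int_pow_mod[of y N j] int_pow_mod[of z M k]
      by simp
    moreover have "(i mod N, j mod N, k mod M) \<in> {0..<N} \<times> {0..<N} \<times> {0..<M}"
      using assms by simp
    ultimately show "g \<in> (\<lambda>(i, j, k). nf i j k) ` ({0..<N} \<times> {0..<N} \<times> {0..<M})" by force
  qed
  then show ?thesis by (rule finite_subset) simp
qed

end

locale self_centralizing_commutator_pair =
  nonabelian_self_centralizing G + central_commutator_pair G x y z for G (structure) and x y z +
  assumes z_ne_one: "z \<noteq> \<one>"
begin

lemma centralizer_powers_nf: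
  assumes "z [^] (e * e) \<noteq> \<one>"
    and "g \<in> carrier G" "g \<otimes> x [^] e = x [^] e \<otimes> g" "g \<otimes> y [^] e = y [^] e \<otimes> g"
  shows "\<exists>i j k. g = nf (e * i) (e * j) (e * e * k)"
proof -
  have "x [^] e \<otimes> y [^] e \<noteq> y [^] e \<otimes> x [^] e"
    using assms(1) x_pow_y_pow_commute_iff by simp
  then have "centralizer G {x [^] e, y [^] e} \<subseteq> generate G {x [^] e, y [^] e}"
    by (intro centralizer_subset_generate_pair) simp_all
  moreover have "g \<in> centralizer G {x [^] e, y [^] e}"
    using assms(2-4) unfolding centralizer_def by simp
  ultimately show ?thesis using generate_powers_nf by blast
qed

lemma z_finite_order: "\<exists>m::int. m > 0 \<and> z [^] m = \<one>"
proof (rule ccontr)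
  assume "\<nexists>m::int. m > 0 \<and> z [^] m = \<one>"
  then have z_pow_eq_one: "k = 0" if "z [^] (k::int) = \<one>" for k
    using that int_pow_neg[of z k] by (cases k "0::int" rule: linorder_cases) auto
  have "z [^] (2 * 2 :: int) \<noteq> \<one>"
    using z_pow_eq_one by fastforce
  then obtain i j k where z_nf: "z = nf (2 * i) (2 * j) (2 * 2 * k)"
    using centralizer_powers_nf[of 2 z] int_pow_commute[OF z_closed x_closed z_x_commute, of 1 2]
      int_pow_commute[OF z_closed y_closed z_y_commute, of 1 2] by auto
  have "z [^] (2 * j) = \<one>"
    by (rule nf_commute_x_imp_z_pow_eq_one[of "2 * i" _ "2 * 2 * k"]) (use z_x_commute z_nf in simp)
  then have "j = 0" using z_pow_eq_one[of "2 * j"] by simp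
  have "z [^] (2 * i) = \<one>"
    by (rule nf_commute_y_imp_z_pow_eq_one[of _ "2 * j" "2 * 2 * k"]) (use z_y_commute z_nf in simp)
  then have "i = 0" using z_pow_eq_one[of "2 * i"] by simp
  with \<open>j = 0\<close> have "nf 0 0 1 = nf 0 0 (4 * k)" using z_nf by (simp add: nf_simps)
  from z_pow_eq_one[OF nf_eq_imp_z_pow_eq_one[OF this]] show False by presburger
qed

lemma x_y_finite_order:
  fixes m :: int
  assumes "m > 0" "z [^] m = \<one>"
  shows "\<exists>N::int. N > 0 \<and> x [^] N = \<one> \<and> y [^] N = \<one>"
proof -
  define e where "e = m + 1"
  have "e * e = 1 + (m + 2) * m" unfolding e_def by (simp add: algebra_simps)
  then have "(e * e) mod m = 1 mod m" by simp
  then have "z [^] (e * e) = z"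
    using int_pow_mod[OF z_closed assms(2), of "e * e"] int_pow_mod[OF z_closed assms(2), of 1] by simp
  then have z_e_e: "z [^] (e * e) \<noteq> \<one>" using z_ne_one by simp
  have z_m_e: "z [^] (m * e) = \<one>" "z [^] (e * m) = \<one>"
    using assms(2) by (simp_all add: int_pow_pow[symmetric] mult.commute[of e])
  obtain i1 j1 k1 where x_m: "x [^] m = nf (e * i1) (e * j1) (e * e * k1)"
    using centralizer_powers_nf[OF z_e_e, of "x [^] m"] x_pow_y_pow_commute_iff[of m e] z_m_e
      int_pow_commute[OF x_closed x_closed, of m e] by auto
  obtain i2 j2 k2 where y_m: "y [^] m = nf (e * i2) (e * j2) (e * e * k2)"
    using centralizer_powers_nf[OF z_e_e, of "y [^] m"] x_pow_y_pow_commute_iff[of e m] z_m_e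
      int_pow_commute[OF y_closed y_closed, of m e] by auto
  define p q r s where "p = e * i1 - m" "q = e * j1" "r = e * i2" "s = e * j2 - m"
  have rel: "trivial_mod_z p q" "trivial_mod_z r s"
    unfolding p_q_r_s_def by (fact trivial_mod_z_of_x_pow[OF x_m] trivial_mod_z_of_y_pow[OF y_m])+
  define D where "D = p * s - q * r"
  have "trivial_mod_z D 0" "trivial_mod_z 0 D"
    using trivial_mod_z_lincomb[OF rel, of s "- q"] trivial_mod_z_lincomb[OF rel, of "- r" p]
    unfolding D_def by (simp_all add: algebra_simps)
  then have "x [^] (D * m) = \<one>" "y [^] (D * m) = \<one>"
    using x_pow_eq_one_of_trivial_mod_z y_pow_eq_one_of_trivial_mod_z assms(2) by blast+
  \<comment> \<open>since \<open>m \<equiv> -1 (mod e)\<close>, the determinant \<open>D\<close> is \<open>\<equiv> 1 (mod e)\<close> and hence nonzero\<close>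
  moreover have "D mod e = 1"
  proof -
    have "D = e * (e * i1 * j2 - m * i1 - m * j2 - e * j1 * i2 + m - 1) + 1"
      unfolding D_def p_q_r_s_def e_def by (simp add: algebra_simps)
    then show ?thesis using assms(1) unfolding e_def by simp
  qed
  then have "D \<noteq> 0" by auto
  ultimately show ?thesis using assms(1)
    by (intro exI[of _ "(D * m) * (D * m)"]) (auto simp: int_pow_pow[symmetric] zero_less_mult_iff mult_less_0_iff)
qed

lemma finite_generate: "finite (generate G {x, y})"
proof -
  obtain m :: int where "m > 0" "z [^] m = \<one>" using z_finite_order by blast
  with x_y_finite_order finite_generate_of_orders show ?thesis by blast
qed

lemma finite_centralizer: "finite (centralizer G {x, y})"
proof -
  have "x \<otimes> y \<noteq> y \<otimes> x" using x_y_swap z_ne_one by (simp add: m_assoc)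
  then show ?thesis
    using centralizer_subset_generate_pair[of x y] finite_generate finite_subset by auto
qed

end

context nonabelian_self_centralizing
begin

lemma finite_centralizer_of_central_commutator:
  assumes "a \<in> carrier G" "b \<in> carrier G" "commutator G a b \<noteq> \<one>"
    and "commutator G a b \<in> centralizer G {a, b}"
  shows "finite (centralizer G {a, b})"
proof -
  have "central_commutator_pair G a b (commutator G a b)"
  proof (intro central_commutator_pair.intro[OF is_group] central_commutator_pair_axioms.intro)
    show "a \<otimes> b = b \<otimes> a \<otimes> commutator G a b" using assms(1,2) by (rule mult_eq_commutator)
    show "commutator G a b \<otimes> a = a \<otimes> commutator G a b" "commutator G a b \<otimes> b = b \<otimes> commutator G a b"
      using assms(4) unfolding centralizer_def by auto
  qed (use assms(1,2) in simp_all)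
  then interpret self_centralizing_commutator_pair G a b "commutator G a b"
    by (intro self_centralizing_commutator_pair.intro nonabelian_self_centralizing_axioms
        self_centralizing_commutator_pair_axioms.intro assms(3))
  show ?thesis by (rule finite_centralizer)
qed

end

section \<open>The upper central series of a subgroup\<close>

fun upper_central :: "('a, 'b) monoid_scheme \<Rightarrow> 'a set \<Rightarrow> nat \<Rightarrow> 'a set" where
  "upper_central G N 0 = {\<one>\<^bsub>G\<^esub>}"
| "upper_central G N (Suc j) = {t \<in> N. \<forall>b\<in>N. commutator G t b \<in> upper_central G N j}"

context group
begin

lemma lower_central_subset_carrier: "lower_central G k \<subseteq> carrier G"
proof (induction k)
  case (Suc k)
  then show ?case by (auto intro!: generate_incl)
qed simp

lemma commutator_consistent:
  "subgroup N G \<Longrightarrow> a \<in> N \<Longrightarrow> b \<in> N \<Longrightarrow> commutator (G\<lparr>carrier := N\<rparr>) a b = commutator G a b"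
  unfolding commutator_def by simp

lemma upper_central_subset:
  assumes "subgroup N G"
  shows "upper_central G N j \<subseteq> N"
  using subgroup.one_closed[OF assms] by (cases j) auto

lemma lower_central_subset_upper_central:
  assumes "subgroup N G" "lower_central (G\<lparr>carrier := N\<rparr>) n = {\<one>}" "i \<le> n"
  shows "lower_central (G\<lparr>carrier := N\<rparr>) (n - i) \<subseteq> upper_central G N i"
  using assms(3)
proof (induction i)
  case 0
  then show ?case using assms(2) by simp
next
  case (Suc i)
  then obtain k where k: "n - i = Suc k" "n - Suc i = k" by (metis Suc_diff_Suc Suc_le_lessD)
  have sub_N: "lower_central (G\<lparr>carrier := N\<rparr>) k \<subseteq> N"
    using group.lower_central_subset_carrier[OF subgroup_imp_group[OF assms(1)]] by simp
  have IH: "lower_central (G\<lparr>carrier := N\<rparr>) (Suc k) \<subseteq> upper_central G N i"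
    using Suc k(1) by (metis Suc_leD)
  have "commutator G t b \<in> upper_central G N i"
    if "t \<in> lower_central (G\<lparr>carrier := N\<rparr>) k" "b \<in> N" for t b
  proof -
    have "commutator (G\<lparr>carrier := N\<rparr>) t b \<in> lower_central (G\<lparr>carrier := N\<rparr>) (Suc k)"
      using that by (auto intro: generate.incl)
    with IH have "commutator (G\<lparr>carrier := N\<rparr>) t b \<in> upper_central G N i" by blast
    then show ?thesis using commutator_consistent[OF assms(1)] that sub_N by auto
  qed
  then show ?case unfolding k(2) using sub_N by auto
qed

lemma nilpotent_subset_upper_central:
  assumes "subgroup N G" "nilpotent_group (G\<lparr>carrier := N\<rparr>)"
  shows "\<exists>n. N \<subseteq> upper_central G N n"
proof -
  obtain n where "lower_central (G\<lparr>carrier := N\<rparr>) n = {\<one>}"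
    using assms(2) unfolding nilpotent_group_def by auto
  from lower_central_subset_upper_central[OF assms(1) this, of n] show ?thesis by auto
qed

lemma upper_central_stable_at_one:
  assumes "subgroup N G" "upper_central G N 2 \<subseteq> upper_central G N 1"
  shows "upper_central G N j \<subseteq> upper_central G N 1"
proof (induction j)
  case 0
  have "commutator G \<one> b = \<one>" if "b \<in> N" for b
    using that subgroup.mem_carrier[OF assms(1)] by (simp add: commutator_def)
  then show ?case using subgroup.one_closed[OF assms(1)] by simp
next
  case (Suc j)
  then have "upper_central G N (Suc j) \<subseteq> upper_central G N 2"
    by (auto simp: numeral_2_eq_2)
  then show ?case using assms(2) by blast
qed

lemma finite_upper_central:
  assumes "subgroup N G" "a \<in> N" "b \<in> N" "finite (centralizer G {a, b})"
  shows "finite (upper_central G N j)"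
proof (induction j)
  case (Suc j)
  have conj: "inv t \<otimes> c \<otimes> t \<in> (\<lambda>w. w \<otimes> c) ` upper_central G N j"
    if "t \<in> upper_central G N (Suc j)" "c \<in> N" for t c
  proof -
    have "t \<in> carrier G" "c \<in> carrier G" using that subgroup.mem_carrier[OF assms(1)] by auto
    moreover have "commutator G t (inv c) \<in> upper_central G N j"
      using that subgroup.m_inv_closed[OF assms(1)] by simp
    ultimately show ?thesis
      by (intro image_eqI[of _ _ "commutator G t (inv c)"]) (simp_all add: commutator_def m_assoc)
  qed
  show ?case
  proof (rule finite_of_finite_conjugates[OF _ _ _ assms(4), where
        A = "(\<lambda>w. w \<otimes> a) ` upper_central G N j" and B = "(\<lambda>w. w \<otimes> b) ` upper_central G N j"])
    show "upper_central G N (Suc j) \<subseteq> carrier G"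
      using upper_central_subset[OF assms(1)] subgroup.subset[OF assms(1)] by blast
    show "a \<in> carrier G" "b \<in> carrier G" using assms(2,3) subgroup.mem_carrier[OF assms(1)] by auto
  qed (use Suc conj assms(2,3) in auto)
qed simp

end

section \<open>Nilpotent normal subgroups\<close>

context group
begin

lemma finite_abelian_normal:
  assumes "N1 \<lhd> G" "N1 \<subseteq> centralizer G N1" "N2 \<lhd> G" "a \<in> N1" "b \<in> N2"
    and "finite (N1 \<inter> N2)" "finite (centralizer G {a, b})"
  shows "finite N1"
proof -
  have N: "subgroup N1 G" "subgroup N2 G" using assms(1,3) by (simp_all add: normal_imp_subgroup)
  have ab: "a \<in> carrier G" "b \<in> carrier G"
    using subgroup.mem_carrier[OF N(1) assms(4)] subgroup.mem_carrier[OF N(2) assms(5)] .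
  show ?thesis
  proof (rule finite_of_finite_conjugates[OF _ ab assms(7), where
        A = "{a}" and B = "(\<lambda>w. b \<otimes> w) ` (N2 \<inter> N1)"])
    fix t assume t: "t \<in> N1"
    then have tc: "t \<in> carrier G" using subgroup.mem_carrier[OF N(1)] by blast
    have "a \<otimes> t = t \<otimes> a" using assms(2) t assms(4) unfolding centralizer_def by blast
    then show "inv t \<otimes> a \<otimes> t \<in> {a}" using conj_eq_iff[OF tc ab(1) ab(1)] by simp
    have "inv t \<otimes> b \<otimes> t = b \<otimes> commutator G b t"
      unfolding commutator_def using tc ab by (simp add: m_assoc flip: m_assoc[of b "inv b"])
    then show "inv t \<otimes> b \<otimes> t \<in> (\<lambda>w. b \<otimes> w) ` (N2 \<inter> N1)"
      using commutator_mem_normal_inter[OF assms(3,1,5) t] by blast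
  qed (use subgroup.subset[OF N(1)] assms(6) in \<open>auto simp: Int_commute\<close>)
qed

end

context nonabelian_self_centralizing
begin

lemma finite_of_nonabelian_nilpotent_normal:
  assumes "N \<lhd> G" "nilpotent_group (G\<lparr>carrier := N\<rparr>)" "u \<in> N" "v \<in> N" "u \<otimes> v \<noteq> v \<otimes> u"
  shows "finite (carrier G)"
proof -
  have N: "subgroup N G" using assms(1) by (rule normal_imp_subgroup)
  have N_carrier: "c \<in> carrier G" if "c \<in> N" for c using subgroup.mem_carrier[OF N that] .
  obtain n where N_upper: "N \<subseteq> upper_central G N n"
    using nilpotent_subset_upper_central[OF N assms(2)] by blast
  have "\<not> upper_central G N 2 \<subseteq> upper_central G N 1"
  proof
    assume "upper_central G N 2 \<subseteq> upper_central G N 1"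
    then have "u \<in> upper_central G N 1"
      using upper_central_stable_at_one[OF N, of n] N_upper assms(3) by blast
    then have "commutator G u v = \<one>" using assms(4) by simp
    then show False
      using assms(5) commutator_eq_one_iff N_carrier assms(3,4) by blast
  qed
  then obtain a where a: "a \<in> upper_central G N 2" "a \<notin> upper_central G N 1" by blast
  have a_N: "a \<in> N" and a_2: "\<forall>b\<in>N. commutator G a b \<in> upper_central G N 1"
    using a(1) by (simp_all add: numeral_2_eq_2)
  obtain b where b: "b \<in> N" "commutator G a b \<noteq> \<one>"
    using a(2) a_N by auto
  have "commutator G (commutator G a b) c = \<one>" if "c \<in> N" for c
    using a_2 b(1) that by simp
  then have "commutator G a b \<in> centralizer G {a, b}"
    using a_N b(1) N_carrier commutator_eq_one_iff[of "commutator G a b"]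
    unfolding centralizer_def by simp
  then have fin_C: "finite (centralizer G {a, b})"
    using finite_centralizer_of_central_commutator[OF N_carrier[OF a_N] N_carrier[OF b(1)] b(2)] by blast
  have "finite N"
    using finite_upper_central[OF N a_N b(1) fin_C] N_upper by (rule finite_subset[rotated])
  from finite_carrier_of_finite_normals[OF assms(1) this assms(1) this a_N b(1) fin_C]
  show ?thesis .
qed

lemma finite_of_noncommuting_abelian_normals:
  assumes "N1 \<lhd> G" "N1 \<subseteq> centralizer G N1" "N2 \<lhd> G" "N2 \<subseteq> centralizer G N2"
    and "a \<in> N1" "b \<in> N2" "a \<otimes> b \<noteq> b \<otimes> a"
  shows "finite (carrier G)"
proof -
  have ab: "a \<in> carrier G" "b \<in> carrier G"
    using subgroup.mem_carrier[OF normal_imp_subgroup[OF assms(1)] assms(5)]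
      subgroup.mem_carrier[OF normal_imp_subgroup[OF assms(3)] assms(6)] .
  have inter_C: "N1 \<inter> N2 \<subseteq> centralizer G {a, b}"
    using assms(2,4,5,6) unfolding centralizer_def by blast
  have "commutator G a b \<in> N1 \<inter> N2"
    by (rule commutator_mem_normal_inter[OF assms(1,3,5,6)])
  then have fin_C: "finite (centralizer G {a, b})"
    using finite_centralizer_of_central_commutator[OF ab] commutator_eq_one_iff[OF ab] assms(7) inter_C
    by blast
  have fin_inter: "finite (N1 \<inter> N2)" using inter_C fin_C by (rule finite_subset)
  have "finite N1"
    using finite_abelian_normal[OF assms(1-3,5,6) fin_inter fin_C] .
  moreover have "finite N2"
    using finite_abelian_normal[OF assms(3,4,1,6,5)] fin_inter fin_C
    by (simp add: Int_commute insert_commute)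
  ultimately show ?thesis
    using finite_carrier_of_finite_normals[OF assms(1) _ assms(3) _ assms(5,6) fin_C] by blast
qed

lemma nilpotent_normals_commute:
  assumes "infinite (carrier G)"
    and "N1 \<lhd> G" "nilpotent_group (G\<lparr>carrier := N1\<rparr>)" "a \<in> N1"
    and "N2 \<lhd> G" "nilpotent_group (G\<lparr>carrier := N2\<rparr>)" "b \<in> N2"
  shows "a \<otimes> b = b \<otimes> a"
proof -
  have abelian: "N \<subseteq> centralizer G N" if "N \<lhd> G" "nilpotent_group (G\<lparr>carrier := N\<rparr>)" for N
    using finite_of_nonabelian_nilpotent_normal[OF that] assms(1)
      subgroup.subset[OF normal_imp_subgroup[OF that(1)]]
    unfolding centralizer_def by blast
  show ?thesis
    using finite_of_noncommuting_abelian_normals[OF assms(2) abelian[OF assms(2,3)]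
        assms(5) abelian[OF assms(5,6)] assms(4,7)] assms(1) by blast
qed

end

theorem theorem5p1:
  fixes G (structure)
  assumes "group G"
    and "infinite (carrier G)"
    and "\<forall>H. subgroup H G \<and> \<not> comm_group (G\<lparr>carrier := H\<rparr>) \<longrightarrow> centralizer G H \<subseteq> H"
  shows "comm_group (G\<lparr>carrier := fitting_subgroup G\<rparr>)"
proof -
  interpret nonabelian_self_centralizing G
    using assms(1,3) by (simp add: nonabelian_self_centralizing_def nonabelian_self_centralizing_axioms_def)
  let ?U = "\<Union>{N. N \<lhd> G \<and> nilpotent_group (G\<lparr>carrier := N\<rparr>)}"
  have "?U \<subseteq> carrier G"
    using normal_imp_subgroup subgroup.subset by blast
  moreover have "a \<otimes> b = b \<otimes> a" if "a \<in> ?U" "b \<in> ?U" for a b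
    using that nilpotent_normals_commute[OF assms(2)] by blast
  ultimately show ?thesis
    unfolding fitting_subgroup_def by (rule comm_group_generate)
qed

end
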